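(* Let $\mathcal{Z}\subset\mathbb{R}^d$ be a convex compact set with $\max_{\mathbf{z},\mathbf{z}'\in\mathcal{Z}}\|\mathbf{z}-\mathbf{z}'\|\le D$, and let $F:\mathcal{Z}\to\mathbb{R}^d$ be single-valued and $L$-Lipschitz continuous. Then: (1) If $\mathbf{w}\in\mathcal{Z}$ is a nearly $(\epsilon,c\epsilon)$-gap solution to $\mathrm{SVI}(F,\mathcal{Z})$ for some $c>0$, then $\mathbf{w}$ is a $\big((1+LcD+Mc)\epsilon\big)$-gap solution to $\mathrm{SVI}(F,\mathcal{Z})$, where $M:=\max_{\mathbf{z}\in\mathcal{Z}}\|F(\mathbf{z})\|$. (2) If $\mathbf{w}$ is an $\epsilon$-gap solution to $\mathrm{SVI}(F,\mathcal{Z})$ and $0<\gamma<L^{-1}$, then $\|\mathbf{w}-\widehat{\mathbf{w}}\|\le\sqrt{\frac{\epsilon}{\gamma^{-1}-L}}$, where $\widehat{\mathbf{w}}$ is the unique solution of $\mathrm{SVI}(F^\gamma_{\mathbf{w}},\mathcal{Z})$ with $F^\gamma_{\mathbf{w}}(\mathbf{z}):=F(\mathbf{z})+\gamma^{-1}(\mathbf{z}-\mathbf{w})$.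
   Context: For single-valued $F$, $\mathrm{SVI}(F,\mathcal{Z})$ asks for $\mathbf{z}^*\in\mathcal{Z}$ with $\langle F(\mathbf{z}^* ),\mathbf{z}-\mathbf{z}^*\rangle\ge0$ for all $\mathbf{z}\in\mathcal{Z}$. A point $\bar{\mathbf{z}}\in\mathcal{Z}$ is an $\epsilon$-gap solution if $\max_{\mathbf{z}\in\mathcal{Z}}\langle F(\bar{\mathbf{z}}),\bar{\mathbf{z}}-\mathbf{z}\rangle\le\epsilon$. A point $\mathbf{w}\in\mathcal{Z}$ is a nearly $(\epsilon,\delta)$-gap solution if there exists $\bar{\mathbf{w}}\in\mathcal{Z}$ with $\|\mathbf{w}-\bar{\mathbf{w}}\|\le\delta$ and $\max_{\mathbf{z}\in\mathcal{Z}}\langle F(\bar{\mathbf{w}}),\bar{\mathbf{w}}-\mathbf{z}\rangle\le\epsilon$. *)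

theory Defs
  imports "HOL-Analysis.Analysis"
begin

definition svi_solution :: "('a::euclidean_space \<Rightarrow> 'a) \<Rightarrow> 'a set \<Rightarrow> 'a \<Rightarrow> bool" where
  "svi_solution F Z z \<longleftrightarrow> z \<in> Z \<and> (\<forall>y\<in>Z. inner (F z) (y - z) \<ge> 0)"

definition gap_solution :: "('a::euclidean_space \<Rightarrow> 'a) \<Rightarrow> 'a set \<Rightarrow> real \<Rightarrow> 'a \<Rightarrow> bool" where
  "gap_solution F Z \<epsilon> z \<longleftrightarrow> z \<in> Z \<and> (\<forall>y\<in>Z. inner (F z) (z - y) \<le> \<epsilon>)"

definition nearly_gap_solution ::
  "('a::euclidean_space \<Rightarrow> 'a) \<Rightarrow> 'a set \<Rightarrow> real \<Rightarrow> real \<Rightarrow> 'a \<Rightarrow> bool" where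
  "nearly_gap_solution F Z \<epsilon> \<delta> w \<longleftrightarrow> w \<in> Z \<and>
     (\<exists>wb\<in>Z. norm (w - wb) \<le> \<delta> \<and> gap_solution F Z \<epsilon> wb)"

end

theory Submission
  imports Defs
begin

text \<open>
  For (1), split \<open>\<langle>F w, w - y\<rangle>\<close> as
  \<open>\<langle>F w', w' - y\<rangle> + \<langle>F w - F w', w - y\<rangle> + \<langle>F w', w - w'\<rangle>\<close> with \<open>w'\<close> the nearby gap
  solution; the three terms are bounded by \<open>\<epsilon>\<close>, \<open>L \<delta> D\<close> and \<open>M \<delta>\<close> respectively,
  where \<open>M = sup\<^sub>Z \<parallel>F\<parallel>\<close> is finite by compactness.
  For (2), the regularised operator \<open>G = F + \<gamma>\<^sup>-\<^sup>1(\<cdot> - w)\<close> is strongly monotone with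
  modulus \<open>\<mu> = \<gamma>\<^sup>-\<^sup>1 - L > 0\<close>. A solution \<open>w'\<close> of \<open>SVI(G, Z)\<close> exists by Brouwer's theorem
  applied to \<open>z \<mapsto> proj\<^sub>Z(z - G z)\<close> and is unique by strong monotonicity. Since
  \<open>G w = F w\<close>, the gap inequality of \<open>w\<close> tested at \<open>w'\<close> and the variational inequality
  of \<open>w'\<close> tested at \<open>w\<close> add up to \<open>\<mu> \<parallel>w - w'\<parallel>\<^sup>2 \<le> \<epsilon>\<close>.
\<close>

definition strongly_monotone_on :: "real \<Rightarrow> 'a::real_inner set \<Rightarrow> ('a \<Rightarrow> 'a) \<Rightarrow> bool" where
  "strongly_monotone_on \<mu> Z G \<longleftrightarrow>
     (\<forall>x\<in>Z. \<forall>y\<in>Z. \<mu> * (norm (x - y))\<^sup>2 \<le> inner (G x - G y) (x - y))"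

lemma bdd_above_norm_image_compact:
  fixes F :: "'a::topological_space \<Rightarrow> 'b::real_normed_vector"
  assumes "compact Z" "continuous_on Z F"
  shows "bdd_above ((\<lambda>z. norm (F z)) ` Z)"
proof -
  have "bounded (F ` Z)" using assms by (intro compact_imp_bounded compact_continuous_image)
  then show ?thesis by (auto simp: bounded_iff bdd_above_def)
qed

lemma gap_solution_if_nearly_gap_solution:
  fixes F :: "'a::euclidean_space \<Rightarrow> 'a"
  assumes lip: "L-lipschitz_on Z F"
    and diam: "\<forall>z\<in>Z. \<forall>z'\<in>Z. norm (z - z') \<le> D"
    and bdd: "bdd_above ((\<lambda>z. norm (F z)) ` Z)"
    and near: "nearly_gap_solution F Z \<epsilon> \<delta> w"
  shows "gap_solution F Z (\<epsilon> + L * \<delta> * D + (SUP z\<in>Z. norm (F z)) * \<delta>) w"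
proof -
  obtain w' where w: "w \<in> Z" and w': "w' \<in> Z" and close: "norm (w - w') \<le> \<delta>"
    and gap: "gap_solution F Z \<epsilon> w'"
    using near unfolding nearly_gap_solution_def by blast
  define M where "M = (SUP z\<in>Z. norm (F z))"
  have L: "L \<ge> 0" using lip by (rule lipschitz_on_nonneg)
  have \<delta>: "\<delta> \<ge> 0" using close by (rule order_trans[OF norm_ge_zero])
  have M: "norm (F w') \<le> M" unfolding M_def using bdd w' by (rule cSUP_upper2) simp
  have "inner (F w) (w - y) \<le> \<epsilon> + L * \<delta> * D + M * \<delta>" if y: "y \<in> Z" for y
  proof -
    have "inner (F w') (w' - y) \<le> \<epsilon>" using gap y unfolding gap_solution_def by blast
    moreover have "inner (F w - F w') (w - y) \<le> L * \<delta> * D"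
    proof -
      have "inner (F w - F w') (w - y) \<le> norm (F w - F w') * norm (w - y)"
        using Cauchy_Schwarz_ineq2 abs_le_iff by blast
      also have "\<dots> \<le> (L * \<delta>) * D"
        using lipschitz_on_normD[OF lip w w'] close diam w y L \<delta>
        by (intro mult_mono) (auto intro: order_trans mult_left_mono)
      finally show ?thesis .
    qed
    moreover have "inner (F w') (w - w') \<le> M * \<delta>"
    proof -
      have "inner (F w') (w - w') \<le> norm (F w') * norm (w - w')"
        using Cauchy_Schwarz_ineq2 abs_le_iff by blast
      also have "\<dots> \<le> M * \<delta>"
        using M close by (intro mult_mono) (auto intro: order_trans[OF norm_ge_zero])
      finally show ?thesis .
    qed
    moreover have "inner (F w) (w - y)
        = inner (F w') (w' - y) + inner (F w - F w') (w - y) + inner (F w') (w - w')"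
      by (simp add: inner_diff_left inner_diff_right)
    ultimately show ?thesis by linarith
  qed
  with w show ?thesis unfolding gap_solution_def M_def by blast
qed

lemma lipschitz_on_inner_lower_bound:
  fixes F :: "'a::real_inner \<Rightarrow> 'a"
  assumes "L-lipschitz_on Z F" "x \<in> Z" "y \<in> Z"
  shows "- L * (norm (x - y))\<^sup>2 \<le> inner (F x - F y) (x - y)"
proof -
  have "\<bar>inner (F x - F y) (x - y)\<bar> \<le> norm (F x - F y) * norm (x - y)"
    by (rule Cauchy_Schwarz_ineq2)
  also have "\<dots> \<le> L * norm (x - y) * norm (x - y)"
    using lipschitz_on_normD[OF assms] by (intro mult_right_mono) auto
  finally show ?thesis by (simp add: power2_eq_square)
qed

lemma strongly_monotone_on_lipschitz_plus_scaled:
  fixes F :: "'a::real_inner \<Rightarrow> 'a"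
  assumes "L-lipschitz_on Z F"
  shows "strongly_monotone_on (a - L) Z (\<lambda>z. F z + a *\<^sub>R (z - w))"
  unfolding strongly_monotone_on_def
proof (intro ballI)
  fix x y assume "x \<in> Z" "y \<in> Z"
  have "inner ((F x + a *\<^sub>R (x - w)) - (F y + a *\<^sub>R (y - w))) (x - y)
      = inner (F x - F y) (x - y) + a * (norm (x - y))\<^sup>2"
    by (simp add: algebra_simps inner_diff_left inner_add_left power2_norm_eq_inner)
  with lipschitz_on_inner_lower_bound[OF assms \<open>x \<in> Z\<close> \<open>y \<in> Z\<close>]
  show "(a - L) * (norm (x - y))\<^sup>2
      \<le> inner ((F x + a *\<^sub>R (x - w)) - (F y + a *\<^sub>R (y - w))) (x - y)"
    by (simp add: algebra_simps)
qed

lemma svi_solution_exists: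
  fixes G :: "'a::euclidean_space \<Rightarrow> 'a"
  assumes "convex Z" "compact Z" "Z \<noteq> {}" "continuous_on Z G"
  shows "\<exists>z. svi_solution G Z z"
proof -
  define T where "T = (\<lambda>z. closest_point Z (z - G z))"
  have closed: "closed Z" using \<open>compact Z\<close> by (rule compact_imp_closed)
  have "continuous_on Z T" unfolding T_def
    by (rule continuous_on_compose2[OF continuous_on_closest_point[OF \<open>convex Z\<close> closed
          \<open>Z \<noteq> {}\<close>, of UNIV]])
       (auto intro: continuous_intros assms(4))
  moreover have "T \<in> Z \<rightarrow> Z" unfolding T_def using closest_point_in_set[OF closed] assms(3) by blast
  ultimately obtain z where z: "z \<in> Z" "T z = z" using brouwer assms(1-3) by metis
  have "inner ((z - G z) - z) (y - z) \<le> 0" if "y \<in> Z" for y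
    using closest_point_dot[OF \<open>convex Z\<close> closed that, of "z - G z"] z(2) by (simp add: T_def)
  then have "\<forall>y\<in>Z. inner (G z) (y - z) \<ge> 0" by simp
  with z(1) show ?thesis unfolding svi_solution_def by blast
qed

lemma svi_solution_unique:
  assumes "strongly_monotone_on \<mu> Z G" "\<mu> > 0" "svi_solution G Z x" "svi_solution G Z y"
  shows "x = y"
proof -
  from assms(3,4) have x: "x \<in> Z" "inner (G x) (y - x) \<ge> 0" and y: "y \<in> Z" "inner (G y) (x - y) \<ge> 0"
    unfolding svi_solution_def by auto
  have "inner (G x - G y) (x - y) \<le> 0"
    using x(2) y(2) by (simp add: inner_diff_left inner_diff_right algebra_simps)
  with assms(1) x(1) y(1) have "\<mu> * (norm (x - y))\<^sup>2 \<le> 0"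
    unfolding strongly_monotone_on_def by (meson order_trans)
  with \<open>\<mu> > 0\<close> show "x = y" by (simp add: mult_le_0_iff)
qed

lemma norm_diff_svi_solution_le:
  assumes "strongly_monotone_on \<mu> Z G" "\<mu> > 0" "gap_solution G Z \<epsilon> w" "svi_solution G Z w'"
  shows "norm (w - w') \<le> sqrt (\<epsilon> / \<mu>)"
proof -
  from assms(3,4) have w: "w \<in> Z" "inner (G w) (w - w') \<le> \<epsilon>"
    and w': "w' \<in> Z" "inner (G w') (w - w') \<ge> 0"
    unfolding gap_solution_def svi_solution_def by auto
  have "\<mu> * (norm (w - w'))\<^sup>2 \<le> inner (G w - G w') (w - w')"
    using assms(1) w(1) w'(1) unfolding strongly_monotone_on_def by blast
  also have "\<dots> \<le> \<epsilon>" using w(2) w'(2) by (simp add: inner_diff_left)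
  finally have "(norm (w - w'))\<^sup>2 \<le> \<epsilon> / \<mu>"
    using \<open>\<mu> > 0\<close> by (simp add: pos_le_divide_eq mult.commute)
  then show ?thesis by (simp add: real_le_rsqrt)
qed

theorem proposition21:
  fixes Z :: "'a::euclidean_space set" and F :: "'a \<Rightarrow> 'a" and D L :: real and w :: 'a
  assumes "convex Z" and "compact Z"
    and "\<forall>z\<in>Z. \<forall>z'\<in>Z. norm (z - z') \<le> D"
    and "L \<ge> 0"
    and "\<forall>x\<in>Z. \<forall>y\<in>Z. norm (F x - F y) \<le> L * norm (x - y)"
    and "w \<in> Z"
  shows
    "(\<forall>\<epsilon> c. c > 0 \<longrightarrow> nearly_gap_solution F Z \<epsilon> (c * \<epsilon>) w \<longrightarrow>
        gap_solution F Z ((1 + L * c * D + (SUP z\<in>Z. norm (F z)) * c) * \<epsilon>) w)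
   \<and> (\<forall>\<epsilon> \<gamma>. gap_solution F Z \<epsilon> w \<longrightarrow> 0 < \<gamma> \<longrightarrow> \<gamma> * L < 1 \<longrightarrow>
        (\<exists>!wh. svi_solution (\<lambda>z. F z + (1 / \<gamma>) *\<^sub>R (z - w)) Z wh)
      \<and> (\<forall>wh. svi_solution (\<lambda>z. F z + (1 / \<gamma>) *\<^sub>R (z - w)) Z wh \<longrightarrow>
           norm (w - wh) \<le> sqrt (\<epsilon> / (1 / \<gamma> - L))))"
proof -
  have lip: "L-lipschitz_on Z F"
    using assms(4,5) by (intro lipschitz_onI) (auto simp: dist_norm)
  show ?thesis
  proof (intro conjI allI impI)
    have bdd: "bdd_above ((\<lambda>z. norm (F z)) ` Z)"
      using assms(2) lipschitz_on_continuous_on[OF lip] by (rule bdd_above_norm_image_compact)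
    fix \<epsilon> c :: real
    assume "nearly_gap_solution F Z \<epsilon> (c * \<epsilon>) w"
    from gap_solution_if_nearly_gap_solution[OF lip assms(3) bdd this]
    show "gap_solution F Z ((1 + L * c * D + (SUP z\<in>Z. norm (F z)) * c) * \<epsilon>) w"
      by (simp add: algebra_simps)
  next
    fix \<epsilon> \<gamma> :: real
    assume gap: "gap_solution F Z \<epsilon> w" and "0 < \<gamma>" "\<gamma> * L < 1"
    define G where "G = (\<lambda>z. F z + (1 / \<gamma>) *\<^sub>R (z - w))"
    have mono: "strongly_monotone_on (1 / \<gamma> - L) Z G"
      unfolding G_def using lip by (rule strongly_monotone_on_lipschitz_plus_scaled)
    have pos: "1 / \<gamma> - L > 0" using \<open>0 < \<gamma>\<close> \<open>\<gamma> * L < 1\<close> by (simp add: field_simps)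
    have "continuous_on Z G"
      unfolding G_def by (intro continuous_intros lipschitz_on_continuous_on[OF lip])
    with assms(1,2,6) obtain wh where "svi_solution G Z wh" using svi_solution_exists by blast
    with svi_solution_unique[OF mono pos]
    show "\<exists>!wh. svi_solution (\<lambda>z. F z + (1 / \<gamma>) *\<^sub>R (z - w)) Z wh"
      unfolding G_def by blast
    have "gap_solution G Z \<epsilon> w" using gap by (simp add: G_def gap_solution_def)
    fix wh assume "svi_solution (\<lambda>z. F z + (1 / \<gamma>) *\<^sub>R (z - w)) Z wh"
    with norm_diff_svi_solution_le[OF mono pos \<open>gap_solution G Z \<epsilon> w\<close>]
    show "norm (w - wh) \<le> sqrt (\<epsilon> / (1 / \<gamma> - L))"
      unfolding G_def by blast
  qed
qed

end
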